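(* Let $\mathcal{X}$ be a finite set, let $d\geq 1$, let $H:\mathcal{X}^{d+1}\to\mathbb{R}$ be any function and let $r\in\mathcal{P}_+(\mathcal{X})$. Then there exist functions $\kappa:\mathcal{X}^d\to\mathbb{R}$ and $\delta:\mathcal{X}\to\mathbb{R}$ such that the function \[ w(x_{d+1}|x_{1:d}) = \exp\bigl(H(x_{1:(d+1)})+\kappa(x_{2:(d+1)})-\kappa(x_{1:d})-\delta(x_{d+1})\bigr),\qquad x_{1:(d+1)}\in\mathcal{X}^{d+1}, \] belongs to $\mathcal{W}_d$ and its first-order stationary distribution satisfies $p_w^{(1)}(x_1)=r(x_1)$ for all $x_1\in\mathcal{X}$.
   Context: $\mathcal{P}_+(\mathcal{X})$ denotes the set of strictly positive probability distributions on the finite set $\mathcal{X}$. For $s\le t$, $x_{s:t}$ abbreviates $(x_s,\ldots,x_t)$. A $d$-th-order Markov kernel is a function $w:\mathcal{X}^{d+1}\to[0,\infty)$, written $w(y|x_{1:d})$, with $\sum_{y\in\mathcal{X}}w(y|x_{1:d})=1$ for every $x_{1:d}\in\mathcal{X}^d$; $\mathcal{W}_d$ is the set of strictly positive $d$-th-order Markov kernels. For $w\in\mathcal{W}_d$, its stationary distribution $p_w^{(d)}$ is the unique probability distribution on $\mathcal{X}^d$ satisfying $\sum_{x_1\in\mathcal{X}}p_w^{(d)}(x_{1:d})\,w(x_{d+1}|x_{1:d})=p_w^{(d)}(x_{2:(d+1)})$ for all $x_{2:(d+1)}\in\mathcal{X}^d$ (equivalently, the stationary distribution of the first-order chain on $\mathcal{X}^d$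 moving from $x_{1:d}$ to $x_{2:(d+1)}$ with probability $w(x_{d+1}|x_{1:d})$). The first-order stationary distribution is $p_w^{(1)}(x_1)=\sum_{x_{2:d}}p_w^{(d)}(x_{1:d})$. *)

theory Defs
  imports Complex_Main
begin

text \<open>Tuples x_{1:k} in X^k are lists of length k over a finite type 'a (= X).
A d-th order kernel w(y|x_{1:d}) is represented as w y xs, xs of length d.\<close>

definition tuples :: "nat \<Rightarrow> 'a list set" where
  "tuples k = {xs. length xs = k}"

definition pos_prob :: "('a::finite \<Rightarrow> real) \<Rightarrow> bool" where
  "pos_prob r \<longleftrightarrow> (\<forall>x. r x > 0) \<and> (\<Sum>x\<in>UNIV. r x) = 1"

definition in_W :: "nat \<Rightarrow> ('a::finite \<Rightarrow> 'a list \<Rightarrow> real) \<Rightarrow> bool" where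
  "in_W d w \<longleftrightarrow> (\<forall>xs\<in>tuples d. \<forall>y. w y xs > 0) \<and>
                  (\<forall>xs\<in>tuples d. (\<Sum>y\<in>UNIV. w y xs) = 1)"

text \<open>p is a stationary distribution (on X^d) of the d-th order kernel w:
 sum_{x_1} p(x_{1:d}) w(x_{d+1}|x_{1:d}) = p(x_{2:(d+1)}).
 Here ys = x_{2:(d+1)}, x_{1:d} = x # butlast ys, x_{d+1} = last ys.\<close>
definition stationary :: "nat \<Rightarrow> ('a::finite \<Rightarrow> 'a list \<Rightarrow> real) \<Rightarrow> ('a list \<Rightarrow> real) \<Rightarrow> bool" where
  "stationary d w p \<longleftrightarrow>
     (\<forall>xs\<in>tuples d. p xs \<ge> 0) \<and> (\<Sum>xs\<in>tuples d. p xs) = 1 \<and>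
     (\<forall>ys\<in>tuples d. (\<Sum>x\<in>UNIV. p (x # butlast ys) * w (last ys) (x # butlast ys)) = p ys)"

definition first_marginal :: "nat \<Rightarrow> ('a list \<Rightarrow> real) \<Rightarrow> 'a \<Rightarrow> real" where
  "first_marginal d p x1 = (\<Sum>zs\<in>tuples (d - 1). p (x1 # zs))"

definition exp_kernel :: "('a list \<Rightarrow> real) \<Rightarrow> ('a list \<Rightarrow> real) \<Rightarrow> ('a \<Rightarrow> real) \<Rightarrow> 'a \<Rightarrow> 'a list \<Rightarrow> real" where
  "exp_kernel H \<kappa> \<delta> y xs = exp (H (xs @ [y]) + \<kappa> (tl xs @ [y]) - \<kappa> xs - \<delta> y)"

end

theory Submission
  imports Defs "HOL-Analysis.Analysis" "HOL-Real_Asymp.Real_Asymp"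
begin

text \<open>
  Maximise, over all joint laws q of (X_{1:d}, X_{d+1}) that are stationary (inflow equals outflow
  in the de Bruijn graph on X^d) and have first marginal r, the free energy
  E_q H + H_q(X_{d+1} | X_{1:d}).  The feasible set is compact and contains the i.i.d. law of r,
  so a maximiser q exists; the infinite slope of x ln x at 0 forces q to be strictly positive.
  Hence its first variation vanishes in every direction preserving the constraints.  Testing with
  the edge (x_{1:d}, x_{d+1}) closed into cycles through a fixed root tuple shows that
  ln q(x_{1:d+1}) - ln q(x_{1:d}) - H(x_{1:d+1}) = kappa(x_{2:d+1}) - kappa(x_{1:d}) - delta(x_{d+1}),
  where kappa sums the first variation along the path to the root.  So the exponential kernel is the
  conditional law of q; being positive, it has the d-marginal of q as its only stationary
  distribution, whose first marginal is r.
\<close>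

lemma mem_tuples [simp]: "xs \<in> tuples k \<longleftrightarrow> length xs = k"
  by (simp add: tuples_def)

lemma tuples_0 [simp]: "tuples 0 = {[]}"
  by (auto simp: tuples_def)

lemma finite_tuples [simp]: "finite (tuples k :: 'a::finite list set)"
  unfolding tuples_def using finite_lists_length_eq[of "UNIV::'a set" k] by simp

lemma sum_tuples_Suc:
  fixes F :: "'a::finite list \<Rightarrow> 'b::comm_monoid_add"
  shows "(\<Sum>xs\<in>tuples (Suc k). F xs) = (\<Sum>x\<in>UNIV. \<Sum>zs\<in>tuples k. F (x # zs))"
proof -
  have tuples_Suc: "tuples (Suc k) = (\<lambda>(x,zs). x # zs) ` (UNIV \<times> tuples k)"
    by (auto simp: image_iff length_Suc_conv)
  have "inj_on (\<lambda>(x,zs). x # zs) (UNIV \<times> tuples k)"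
    by (auto simp: inj_on_def)
  then have "(\<Sum>xs\<in>tuples (Suc k). F xs) = (\<Sum>p\<in>UNIV \<times> tuples k. F ((\<lambda>(x,zs). x # zs) p))"
    unfolding tuples_Suc by (rule sum.reindex[unfolded comp_def])
  then show ?thesis by (simp add: sum.cartesian_product case_prod_beta)
qed

definition xlnx :: "real \<Rightarrow> real" where
  "xlnx x = x * ln x"

lemma continuous_on_xlnx: "continuous_on {0..} xlnx"
  unfolding continuous_on_def
proof
  fix x :: real assume "x \<in> {0..}"
  show "(xlnx \<longlongrightarrow> xlnx x) (at x within {0..})"
  proof (cases "x = 0")
    case True
    have "(xlnx \<longlongrightarrow> 0) (at_right 0)" unfolding xlnx_def by real_asymp
    then show ?thesis using True by (simp add: at_within_Ici_at_right xlnx_def)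
  next
    case False
    with \<open>x \<in> {0..}\<close> have "isCont xlnx x"
      unfolding xlnx_def by (intro continuous_intros) auto
    then show ?thesis by (simp add: isCont_def tendsto_within_subset[where S=UNIV])
  qed
qed

lemma has_real_derivative_xlnx_affine:
  assumes "a + t * b > 0"
  shows "((\<lambda>s. xlnx (a + s * b)) has_real_derivative b * (ln (a + t * b) + 1)) (at t)"
proof -
  have "b * (ln (a + t * b) + 1) = b * ln (a + t * b) + b / (a + t * b) * (a + t * b)"
    using assms by (simp add: field_simps)
  with assms show ?thesis
    unfolding xlnx_def by (auto intro!: derivative_eq_intros)
qed

section \<open>Flows on the de Bruijn graph\<close>

text \<open>
  A flow q assigns mass q (xs, y) to the edge from the d-tuple xs to tl xs @ [y]; a joint law of
  (X_{1:d}, X_{d+1}) is such a flow.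
\<close>

definition outflow :: "('a::finite list \<times> 'a \<Rightarrow> real) \<Rightarrow> 'a list \<Rightarrow> real" where
  "outflow q xs = (\<Sum>y\<in>UNIV. q (xs, y))"

definition inflow :: "('a::finite list \<times> 'a \<Rightarrow> real) \<Rightarrow> 'a list \<Rightarrow> real" where
  "inflow q ys = (\<Sum>x\<in>UNIV. q (x # butlast ys, last ys))"

definition head_marginal :: "nat \<Rightarrow> ('a::finite list \<times> 'a \<Rightarrow> real) \<Rightarrow> 'a \<Rightarrow> real" where
  "head_marginal d q x = (\<Sum>zs\<in>tuples (d - 1). outflow q (x # zs))"

lemma outflow_add: "outflow (\<lambda>e. f e + g e) xs = outflow f xs + outflow g xs"
  by (simp add: outflow_def sum.distrib)

lemma outflow_diff: "outflow (\<lambda>e. f e - g e) xs = outflow f xs - outflow g xs"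
  by (simp add: outflow_def sum_subtractf)

lemma outflow_scale: "outflow (\<lambda>e. c * f e) xs = c * outflow f xs"
  by (simp add: outflow_def sum_distrib_left)

lemma inflow_add: "inflow (\<lambda>e. f e + g e) ys = inflow f ys + inflow g ys"
  by (simp add: inflow_def sum.distrib)

lemma inflow_diff: "inflow (\<lambda>e. f e - g e) ys = inflow f ys - inflow g ys"
  by (simp add: inflow_def sum_subtractf)

lemma inflow_scale: "inflow (\<lambda>e. c * f e) ys = c * inflow f ys"
  by (simp add: inflow_def sum_distrib_left)

lemma head_marginal_add: "head_marginal d (\<lambda>e. f e + g e) x = head_marginal d f x + head_marginal d g x"
  by (simp add: head_marginal_def outflow_add sum.distrib)

lemma head_marginal_diff: "head_marginal d (\<lambda>e. f e - g e) x = head_marginal d f x - head_marginal d g x"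
  by (simp add: head_marginal_def outflow_diff sum_subtractf)

lemma head_marginal_scale: "head_marginal d (\<lambda>e. c * f e) x = c * head_marginal d f x"
  by (simp add: head_marginal_def outflow_scale sum_distrib_left)

lemmas flow_linear =
  outflow_add outflow_diff outflow_scale inflow_add inflow_diff inflow_scale
  head_marginal_add head_marginal_diff head_marginal_scale

lemma continuous_on_coordinate [continuous_intros]:
  "continuous_on S (\<lambda>q. q i :: 'b::topological_space)"
  by (rule continuous_on_subset[OF continuous_on_product_coordinates]) simp

lemma continuous_on_outflow [continuous_intros]: "continuous_on S (\<lambda>q. outflow q xs)"
  unfolding outflow_def by (intro continuous_intros)

lemma continuous_on_inflow [continuous_intros]: "continuous_on S (\<lambda>q. inflow q ys)"
  unfolding inflow_def by (intro continuous_intros)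

lemma continuous_on_head_marginal [continuous_intros]: "continuous_on S (\<lambda>q. head_marginal d q x)"
  unfolding head_marginal_def by (intro continuous_intros)

lemma outflow_nonneg: "(\<And>e. 0 \<le> q e) \<Longrightarrow> 0 \<le> outflow q xs"
  by (simp add: outflow_def sum_nonneg)

lemma outflow_pos: "(\<And>y. 0 < q (xs, y)) \<Longrightarrow> 0 < outflow q xs"
  by (simp add: outflow_def sum_pos)

lemma le_outflow: "(\<And>e. 0 \<le> q e) \<Longrightarrow> q (xs, y) \<le> outflow q xs"
  unfolding outflow_def by (rule member_le_sum) auto

lemma outflow_le_head_marginal:
  assumes "\<And>e. 0 \<le> q e" and "length zs = d - 1"
  shows "outflow q (x # zs) \<le> head_marginal d q x"
  unfolding head_marginal_def using assms
  by (intro member_le_sum[of zs _ "\<lambda>zs. outflow q (x # zs)"]) (auto intro: outflow_nonneg)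

definition flow_pairing :: "nat \<Rightarrow> ('a::finite list \<times> 'a \<Rightarrow> real) \<Rightarrow> ('a list \<times> 'a \<Rightarrow> real) \<Rightarrow> real" where
  "flow_pairing d h g = (\<Sum>xs\<in>tuples d. \<Sum>y\<in>UNIV. h (xs, y) * g (xs, y))"

lemma flow_pairing_add: "flow_pairing d (\<lambda>e. f e + h e) g = flow_pairing d f g + flow_pairing d h g"
  by (simp add: flow_pairing_def sum.distrib algebra_simps)

lemma flow_pairing_diff: "flow_pairing d (\<lambda>e. f e - h e) g = flow_pairing d f g - flow_pairing d h g"
  by (simp add: flow_pairing_def sum_subtractf algebra_simps)

lemma flow_pairing_scale: "flow_pairing d (\<lambda>e. c * h e) g = c * flow_pairing d h g"
  by (simp add: flow_pairing_def sum_distrib_left algebra_simps)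

lemma outflow_indicator: "outflow (indicator {(es, s)}) ys = of_bool (es = ys)"
  by (simp add: outflow_def indicator_def)

lemma inflow_indicator:
  assumes "es \<noteq> []" "ys \<noteq> []"
  shows "inflow (indicator {(es, s)}) ys = of_bool (tl es @ [s] = ys)"
proof -
  have "inflow (indicator {(es, s)}) ys = (\<Sum>x\<in>UNIV. of_bool (x = hd es \<and> butlast ys = tl es \<and> last ys = s))"
    unfolding inflow_def indicator_def using assms(1) by (intro sum.cong refl) (cases es; auto)
  also have "\<dots> = of_bool (butlast ys = tl es \<and> last ys = s)"
    by (cases "butlast ys = tl es \<and> last ys = s") auto
  also have "(butlast ys = tl es \<and> last ys = s) \<longleftrightarrow> tl es @ [s] = ys"
    using assms(2) by (metis append_butlast_last_id butlast_snoc last_snoc)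
  finally show ?thesis .
qed

lemma head_marginal_indicator:
  assumes "length es = d" "1 \<le> d"
  shows "head_marginal d (indicator {(es, s)}) x = of_bool (hd es = x)"
proof -
  obtain e es' where es: "es = e # es'" using assms by (cases es) auto
  have "head_marginal d (indicator {(es, s)}) x = (\<Sum>zs\<in>tuples (d - 1). of_bool (zs = es' \<and> x = e))"
    unfolding head_marginal_def outflow_indicator es by (intro sum.cong) auto
  also have "\<dots> = of_bool (x = e)"
    using assms es by (cases "x = e") auto
  finally show ?thesis using es by auto
qed

lemma flow_pairing_indicator:
  assumes "es \<in> tuples d"
  shows "flow_pairing d (indicator {(es, s)}) g = g (es, s)"
proof -
  have "(\<Sum>y\<in>UNIV. indicator {(es, s)} (xs, y) * g (xs, y)) = of_bool (xs = es) * g (es, s)" for xs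
    by (cases "xs = es") (auto simp: indicator_def if_distrib cong: if_cong)
  then show ?thesis using assms by (simp add: flow_pairing_def)
qed

fun path_flow :: "nat \<Rightarrow> 'a \<Rightarrow> 'a list \<Rightarrow> 'a list \<times> 'a \<Rightarrow> real" where
  "path_flow 0 a us = (\<lambda>_. 0)"
| "path_flow (Suc k) a us = (\<lambda>e. indicator {(us, a)} e + path_flow k a (tl us @ [a]) e)"

fun path_sum :: "nat \<Rightarrow> 'a \<Rightarrow> ('a list \<times> 'a \<Rightarrow> real) \<Rightarrow> 'a list \<Rightarrow> real" where
  "path_sum 0 a g us = 0"
| "path_sum (Suc k) a g us = g (us, a) + path_sum k a g (tl us @ [a])"

lemma path_flow_outside:
  "length us = d \<Longrightarrow> 1 \<le> d \<Longrightarrow> xs \<notin> tuples d \<Longrightarrow> path_flow k a us (xs, y) = 0"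
  by (induction k arbitrary: us) (auto simp: indicator_def)

lemma outflow_path_flow:
  assumes "k \<le> length us" "us \<noteq> []" "ys \<noteq> []"
  shows "outflow (path_flow k a us) ys =
           inflow (path_flow k a us) ys + of_bool (us = ys) - of_bool (drop k us @ replicate k a = ys)"
  using assms
proof (induction k arbitrary: us)
  case 0
  then show ?case by (simp add: outflow_def inflow_def)
next
  case (Suc k)
  have "drop k (tl us @ [a]) @ replicate k a = drop (Suc k) us @ replicate (Suc k) a"
    using Suc.prems by (simp add: drop_Suc replicate_append_same[symmetric])
  with Suc show ?case
    by (simp add: flow_linear outflow_indicator inflow_indicator)
qed

lemma head_marginal_path_flow:
  assumes "length us = d" "k \<le> d" "1 \<le> d"
  shows "head_marginal d (path_flow k a us) x = of_nat (count_list (take k us) x)"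
  using assms
proof (induction k arbitrary: us)
  case 0
  then show ?case by (simp add: head_marginal_def outflow_def)
next
  case (Suc k)
  then have "take (Suc k) us = hd us # take k (tl us @ [a])"
    by (cases us) auto
  with Suc show ?case
    by (simp add: flow_linear head_marginal_indicator)
qed

lemma flow_pairing_path_flow:
  "length us = d \<Longrightarrow> 1 \<le> d \<Longrightarrow> flow_pairing d (path_flow k a us) g = path_sum k a g us"
proof (induction k arbitrary: us)
  case (Suc k)
  then have "length (tl us @ [a]) = d" by (cases us) auto
  with Suc show ?case by (simp add: flow_pairing_add flow_pairing_indicator)
qed (simp add: flow_pairing_def)

definition circulations :: "nat \<Rightarrow> ('a::finite \<Rightarrow> real) \<Rightarrow> ('a list \<times> 'a \<Rightarrow> real) set" where
  "circulations d r = {q. (\<forall>xs y. xs \<notin> tuples d \<longrightarrow> q (xs, y) = 0) \<and> (\<forall>e. 0 \<le> q e) \<and>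
     (\<forall>ys. ys \<in> tuples d \<longrightarrow> outflow q ys = inflow q ys) \<and> (\<forall>x. head_marginal d q x = r x)}"

definition tangent_direction :: "nat \<Rightarrow> ('a::finite list \<times> 'a \<Rightarrow> real) \<Rightarrow> bool" where
  "tangent_direction d h \<longleftrightarrow> (\<forall>xs y. xs \<notin> tuples d \<longrightarrow> h (xs, y) = 0) \<and>
     (\<forall>ys. ys \<in> tuples d \<longrightarrow> outflow h ys = inflow h ys) \<and> (\<forall>x. head_marginal d h x = 0)"

lemma circulations_nonneg: "q \<in> circulations d r \<Longrightarrow> 0 \<le> q e"
  unfolding circulations_def by blast

lemma circulations_outflow_eq_inflow:
  "q \<in> circulations d r \<Longrightarrow> ys \<in> tuples d \<Longrightarrow> outflow q ys = inflow q ys"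
  by (simp add: circulations_def)

lemma circulations_head_marginal: "q \<in> circulations d r \<Longrightarrow> head_marginal d q x = r x"
  by (simp add: circulations_def)

lemma circulations_add_tangent:
  assumes "q \<in> circulations d r" and "tangent_direction d h" and "\<And>e. 0 \<le> q e + t * h e"
  shows "(\<lambda>e. q e + t * h e) \<in> circulations d r"
  using assms unfolding circulations_def tangent_direction_def by (auto simp: flow_linear)

lemma tangent_direction_diff:
  assumes "Q \<in> circulations d r" and "q \<in> circulations d r"
  shows "tangent_direction d (\<lambda>e. Q e - q e)"
  using assms unfolding circulations_def tangent_direction_def by (auto simp: flow_linear)

lemma add_scaled_diff_pos:
  fixes x y t :: real
  assumes "0 \<le> x" "0 < y" "0 < t" "t \<le> 1"
  shows "0 < x + t * (y - x)"
proof -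
  have "0 < (1 - t) * x + t * y"
    using assms by (intro add_nonneg_pos mult_nonneg_nonneg mult_pos_pos) auto
  then show ?thesis by (simp add: algebra_simps)
qed

lemma segment_in_circulations:
  assumes q: "q \<in> circulations d r" and Q: "Q \<in> circulations d r" and t: "0 \<le> t" "t \<le> 1"
  shows "(\<lambda>e. q e + t * (Q e - q e)) \<in> circulations d r"
proof (rule circulations_add_tangent[OF q tangent_direction_diff[OF Q q]])
  fix e
  have "0 \<le> (1 - t) * q e + t * Q e"
    using t circulations_nonneg[OF q] circulations_nonneg[OF Q] by simp
  then show "0 \<le> q e + t * (Q e - q e)" by (simp add: algebra_simps)
qed

definition product_flow :: "nat \<Rightarrow> ('a::finite \<Rightarrow> real) \<Rightarrow> 'a list \<times> 'a \<Rightarrow> real" where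
  "product_flow d r e = (if fst e \<in> tuples d then prod_list (map r (fst e)) * r (snd e) else 0)"

locale first_marginal_constraint =
  fixes d :: nat and r :: "'a::finite \<Rightarrow> real"
  assumes order_pos: "1 \<le> d" and pos_prob_r: "pos_prob r"
begin

lemma r_pos: "r x > 0"
  using pos_prob_r by (simp add: pos_prob_def)

lemma sum_r: "(\<Sum>x\<in>UNIV. r x) = 1"
  using pos_prob_r by (simp add: pos_prob_def)

lemma r_le_1: "r x \<le> 1"
  using member_le_sum[of x UNIV r] r_pos sum_r by (simp add: less_imp_le)

lemma prod_list_r_pos: "prod_list (map r xs) > 0"
  by (induction xs) (simp_all add: r_pos)

lemma sum_tuples_prod_list_r: "(\<Sum>xs\<in>tuples k. prod_list (map r xs)) = 1"
proof (induction k)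
  case (Suc k)
  then show ?case by (simp add: sum_tuples_Suc sum_distrib_left[symmetric] sum_distrib_right[symmetric] sum_r)
qed simp

lemma product_flow_pos: "xs \<in> tuples d \<Longrightarrow> product_flow d r (xs, y) > 0"
  by (simp add: product_flow_def prod_list_r_pos r_pos)

lemma tuples_Cons_butlast: "ys \<in> tuples d \<Longrightarrow> x # butlast ys \<in> tuples d"
  using order_pos by (cases ys rule: rev_cases) auto

lemma product_flow_in_circulations: "product_flow d r \<in> circulations d r"
proof -
  have out: "outflow (product_flow d r) xs = prod_list (map r xs)" if "xs \<in> tuples d" for xs
    using that by (simp add: outflow_def product_flow_def sum_distrib_left[symmetric] sum_r)
  moreover have "inflow (product_flow d r) ys = prod_list (map r ys)" if ys: "ys \<in> tuples d" for ys
  proof -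
    obtain zs z where ys_eq: "ys = zs @ [z]"
      using ys order_pos by (cases ys rule: rev_cases) auto
    have "inflow (product_flow d r) ys = (\<Sum>x\<in>UNIV. r x * prod_list (map r zs) * r z)"
      using ys ys_eq by (simp add: inflow_def product_flow_def)
    also have "\<dots> = prod_list (map r ys)"
      by (simp add: ys_eq sum_distrib_right[symmetric] sum_r)
    finally show ?thesis .
  qed
  moreover have "head_marginal d (product_flow d r) x = r x" for x
  proof -
    have "head_marginal d (product_flow d r) x = (\<Sum>zs\<in>tuples (d - 1). r x * prod_list (map r zs))"
      unfolding head_marginal_def using order_pos by (intro sum.cong refl) (simp add: out)
    then show ?thesis by (simp add: sum_distrib_left[symmetric] sum_tuples_prod_list_r)
  qed
  moreover have "0 \<le> product_flow d r e" for e
    using prod_list_r_pos r_pos by (simp add: product_flow_def less_imp_le)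
  moreover have "product_flow d r (xs, y) = 0" if "xs \<notin> tuples d" for xs y
    using that by (simp add: product_flow_def)
  ultimately show ?thesis
    unfolding circulations_def by simp
qed

lemma outflow_le_1:
  assumes "q \<in> circulations d r" and "xs \<in> tuples d"
  shows "outflow q xs \<le> 1"
proof -
  obtain x zs where "xs = x # zs" and "length zs = d - 1"
    using assms(2) order_pos by (cases xs) auto
  then have "outflow q xs \<le> head_marginal d q x"
    using assms(1) by (simp add: outflow_le_head_marginal circulations_nonneg)
  also have "\<dots> = r x" using assms(1) by (simp add: circulations_def)
  finally show ?thesis using r_le_1[of x] by simp
qed

lemma circulations_le_1:
  assumes "q \<in> circulations d r"
  shows "q (xs, y) \<le> 1"
proof (cases "xs \<in> tuples d")
  case True
  have "q (xs, y) \<le> outflow q xs"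
    using assms by (intro le_outflow) (rule circulations_nonneg)
  also have "\<dots> \<le> 1" using assms True by (rule outflow_le_1)
  finally show ?thesis .
qed (use assms in \<open>simp add: circulations_def\<close>)

lemma sum_outflow_circulation:
  assumes "q \<in> circulations d r"
  shows "(\<Sum>xs\<in>tuples d. outflow q xs) = 1"
proof -
  have "d = Suc (d - 1)" using order_pos by simp
  then have "(\<Sum>xs\<in>tuples d. outflow q xs) = (\<Sum>x\<in>UNIV. head_marginal d q x)"
    unfolding head_marginal_def by (metis sum_tuples_Suc)
  then show ?thesis using assms sum_r by (simp add: circulations_def)
qed

lemma compact_circulations: "compact (circulations d r)"
proof -
  define S where "S = (\<lambda>e::'a list \<times> 'a. if fst e \<in> tuples d then {0..1::real} else {0})"
  have "compactin (product_topology (\<lambda>_. euclidean) UNIV) (PiE UNIV S)"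
    unfolding compactin_PiE by (auto simp: S_def)
  then have "compact (PiE UNIV S)" by (simp add: euclidean_product_topology)
  moreover have "closed (circulations d r)"
    unfolding circulations_def
    by (intro closed_Collect_conj closed_Collect_all closed_Collect_imp closed_Collect_eq
        closed_Collect_le open_Collect_const continuous_intros)
  moreover have "circulations d r \<subseteq> PiE UNIV S"
    using circulations_le_1 circulations_nonneg by (auto simp: S_def circulations_def PiE_iff)
  ultimately show ?thesis
    using compact_Int_closed[of "PiE UNIV S" "circulations d r"] by (simp add: Int_absorb1)
qed

end

section \<open>The free energy and its maximisers\<close>

text \<open>E_q H plus the conditional entropy of the next letter given the current d-tuple.\<close>

definition free_energy :: "nat \<Rightarrow> ('a::finite list \<Rightarrow> real) \<Rightarrow> ('a list \<times> 'a \<Rightarrow> real) \<Rightarrow> real" where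
  "free_energy d H q = (\<Sum>xs\<in>tuples d.
     (\<Sum>y\<in>UNIV. q (xs, y) * H (xs @ [y]) - xlnx (q (xs, y))) + xlnx (outflow q xs))"

definition free_energy_slope ::
  "nat \<Rightarrow> ('a::finite list \<Rightarrow> real) \<Rightarrow> ('a list \<times> 'a \<Rightarrow> real) \<Rightarrow> ('a list \<times> 'a \<Rightarrow> real) \<Rightarrow> real \<Rightarrow> real"
where
  "free_energy_slope d H q h t = (\<Sum>xs\<in>tuples d. \<Sum>y\<in>UNIV. h (xs, y) *
     (H (xs @ [y]) - ln (q (xs, y) + t * h (xs, y)) + ln (outflow q xs + t * outflow h xs)))"

lemma continuous_on_free_energy: "continuous_on {q. \<forall>e. 0 \<le> q e} (free_energy d H)"
proof -
  have "continuous_on {q. \<forall>e. 0 \<le> q e} (\<lambda>q. xlnx (q e))" for e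
    by (rule continuous_on_compose2[OF continuous_on_xlnx continuous_on_coordinate]) auto
  moreover have "continuous_on {q. \<forall>e. 0 \<le> q e} (\<lambda>q. xlnx (outflow q xs))" for xs
    by (rule continuous_on_compose2[OF continuous_on_xlnx continuous_on_outflow])
       (auto intro: outflow_nonneg)
  ultimately show ?thesis
    unfolding free_energy_def by (intro continuous_intros)
qed

lemma has_real_derivative_free_energy:
  assumes pos: "\<And>xs y. xs \<in> tuples d \<Longrightarrow> q (xs, y) + t * h (xs, y) > 0"
  shows "((\<lambda>s. free_energy d H (\<lambda>e. q e + s * h e)) has_real_derivative
           free_energy_slope d H q h t) (at t)"
proof -
  have outflow_pos: "outflow q xs + t * outflow h xs > 0" if "xs \<in> tuples d" for xs
    using pos[OF that] by (simp add: outflow_def sum_distrib_left sum.distrib[symmetric] sum_pos)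
  have "((\<lambda>s. \<Sum>xs\<in>tuples d. (\<Sum>y\<in>UNIV. (q (xs, y) + s * h (xs, y)) * H (xs @ [y])
           - xlnx (q (xs, y) + s * h (xs, y))) + xlnx (outflow q xs + s * outflow h xs))
        has_real_derivative
          (\<Sum>xs\<in>tuples d. (\<Sum>y\<in>UNIV. h (xs, y) * H (xs @ [y])
           - h (xs, y) * (ln (q (xs, y) + t * h (xs, y)) + 1))
           + outflow h xs * (ln (outflow q xs + t * outflow h xs) + 1))) (at t)"
    by (intro DERIV_sum DERIV_add DERIV_diff has_real_derivative_xlnx_affine pos outflow_pos)
       (auto intro!: derivative_eq_intros)
  moreover have "(\<Sum>xs\<in>tuples d. (\<Sum>y\<in>UNIV. h (xs, y) * H (xs @ [y])
           - h (xs, y) * (ln (q (xs, y) + t * h (xs, y)) + 1))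
           + outflow h xs * (ln (outflow q xs + t * outflow h xs) + 1))
      = free_energy_slope d H q h t"
    unfolding free_energy_slope_def
    by (intro sum.cong refl)
       (simp add: outflow_def sum_distrib_right sum_subtractf[symmetric] sum.distrib[symmetric] algebra_simps)
  ultimately show ?thesis
    by (simp add: free_energy_def flow_linear)
qed

lemma free_energy_slope_0: "free_energy_slope d H q h 0 =
    flow_pairing d h (\<lambda>e. H (fst e @ [snd e]) - ln (q e) + ln (outflow q (fst e)))"
  by (simp add: free_energy_slope_def flow_pairing_def)

lemma free_energy_slope_zero_at_maximizer:
  fixes q :: "'a::finite list \<times> 'a \<Rightarrow> real"
  assumes q: "q \<in> circulations d r"
    and max: "\<forall>q'\<in>circulations d r. free_energy d H q' \<le> free_energy d H q"
    and q_pos: "\<And>xs y. xs \<in> tuples d \<Longrightarrow> q (xs, y) > 0"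
    and h: "tangent_direction d h"
  shows "free_energy_slope d H q h 0 = 0"
proof -
  define \<phi> where "\<phi> t = free_energy d H (\<lambda>e. q e + t * h e)" for t
  have "\<forall>\<^sub>F t in nhds 0. \<forall>e\<in>(tuples d :: 'a list set) \<times> (UNIV :: 'a set). 0 < q e + t * h e"
  proof (intro eventually_ball_finite ballI)
    fix e assume "e \<in> (tuples d :: 'a list set) \<times> (UNIV :: 'a set)"
    then have "((\<lambda>t. q e + t * h e) \<longlongrightarrow> q e) (nhds 0)" "0 < q e"
      using q_pos by (auto intro!: tendsto_eq_intros filterlim_ident)
    then show "\<forall>\<^sub>F t in nhds 0. 0 < q e + t * h e"
      by (rule order_tendstoD)
  qed simp
  then have "\<forall>\<^sub>F t in at 0. \<phi> t \<le> \<phi> 0"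
  proof (rule eventually_at_filter[THEN iffD2, OF eventually_mono], intro impI)
    fix t :: real assume pos: "\<forall>e\<in>(tuples d :: 'a list set) \<times> (UNIV :: 'a set). 0 < q e + t * h e"
    have "0 \<le> q e + t * h e" for e
    proof (cases "fst e \<in> tuples d")
      case False
      with q h show ?thesis by (cases e) (simp add: circulations_def tangent_direction_def)
    next
      case True
      with pos show ?thesis by (cases e) (auto intro: less_imp_le)
    qed
    then have "(\<lambda>e. q e + t * h e) \<in> circulations d r"
      by (rule circulations_add_tangent[OF q h])
    with max show "\<phi> t \<le> \<phi> 0" by (simp add: \<phi>_def)
  qed
  moreover have "(\<phi> has_real_derivative free_energy_slope d H q h 0) (at 0)"
    unfolding \<phi>_def by (rule has_real_derivative_free_energy) (simp add: q_pos)
  ultimately have "(*) (free_energy_slope d H q h 0) = (\<lambda>_. 0)"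
    by (intro has_derivative_local_max) (simp_all add: has_field_derivative_def)
  then show ?thesis by (metis mult_1_right)
qed

lemma ln_ratio_lower_bound:
  fixes h q qt L :: real
  assumes "0 < qt" "qt \<le> L" "L \<le> 1" and "h < 0 \<Longrightarrow> 0 < q \<and> q \<le> 2 * qt"
  shows "min 0 (h * ln (2 / q)) \<le> h * (ln L - ln qt)"
proof (cases "h < 0")
  case True
  with assms have "ln (q / 2) \<le> ln qt"
    by (simp add: ln_le_cancel_iff)
  moreover have "ln L \<le> 0" using assms by simp
  moreover have "ln (2 / q) = - ln (q / 2)"
    using True assms by (simp add: ln_div)
  ultimately have "ln L - ln qt \<le> ln (2 / q)" by linarith
  then have "h * ln (2 / q) \<le> h * (ln L - ln qt)"
    using True by (intro mult_left_mono_neg) auto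
  then show ?thesis by (simp add: min_le_iff_disj)
next
  case False
  with assms have "0 \<le> h * (ln L - ln qt)" by simp
  then show ?thesis by (simp add: min_le_iff_disj)
qed

context first_marginal_constraint
begin

lemma free_energy_maximizer_exists:
  "\<exists>q\<in>circulations d r. \<forall>q'\<in>circulations d r. free_energy d H q' \<le> free_energy d H q"
proof -
  have "continuous_on (circulations d r) (free_energy d H)"
    by (rule continuous_on_subset[OF continuous_on_free_energy]) (auto simp: circulations_def)
  then show ?thesis
    using continuous_attains_sup[OF compact_circulations] product_flow_in_circulations by blast
qed

lemma segment_log_ratio_lower_bound:
  assumes q: "q \<in> circulations d r" and Q: "Q \<in> circulations d r"
    and Q_pos: "\<And>y. Q (xs, y) > 0" and xs: "xs \<in> tuples d" and t: "0 < t" "t \<le> 1/2"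
  defines "h \<equiv> \<lambda>e. Q e - q e"
  shows "min 0 (h (xs, y) * ln (2 / q (xs, y)))
           \<le> h (xs, y) * (ln (outflow q xs + t * outflow h xs) - ln (q (xs, y) + t * h (xs, y)))"
proof (rule ln_ratio_lower_bound)
  have line: "(\<lambda>e. q e + t * h e) \<in> circulations d r"
    unfolding h_def using segment_in_circulations[OF q Q] t by simp
  show "0 < q (xs, y) + t * h (xs, y)"
    unfolding h_def using t Q_pos circulations_nonneg[OF q] by (intro add_scaled_diff_pos) auto
  show "q (xs, y) + t * h (xs, y) \<le> outflow q xs + t * outflow h xs"
    "outflow q xs + t * outflow h xs \<le> 1"
    using le_outflow[of "\<lambda>e. q e + t * h e", OF circulations_nonneg[OF line]] outflow_le_1[OF line xs]
    by (simp_all add: flow_linear)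
  assume "h (xs, y) < 0"
  then have "0 < q (xs, y)" using Q_pos[of y] by (simp add: h_def)
  moreover have "t * q (xs, y) \<le> 1/2 * q (xs, y)"
    using calculation t by (intro mult_right_mono) auto
  moreover have "0 \<le> t * Q (xs, y)" using Q_pos[of y] t by simp
  moreover have "q (xs, y) + t * h (xs, y) = q (xs, y) - t * q (xs, y) + t * Q (xs, y)"
    by (simp add: h_def algebra_simps)
  ultimately show "0 < q (xs, y) \<and> q (xs, y) \<le> 2 * (q (xs, y) + t * h (xs, y))"
    by argo
qed

lemma segment_log_ratio_at_vanishing_edge:
  assumes Q: "Q \<in> circulations d r" and a_pos: "0 < Q (xs0, y0)"
    and q0: "q (xs0, y0) = 0" and out0: "outflow q xs0 > 0" and t: "0 < t" "t \<le> 1/2"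
  defines "h \<equiv> \<lambda>e. Q e - q e" and "a \<equiv> Q (xs0, y0)"
  shows "a * (ln (outflow q xs0 / 2) - ln a) - a * ln t
           \<le> h (xs0, y0) * (ln (outflow q xs0 + t * outflow h xs0) - ln (q (xs0, y0) + t * h (xs0, y0)))"
proof -
  have "0 \<le> t * outflow Q xs0"
    using t outflow_nonneg[of Q, OF circulations_nonneg[OF Q]] by simp
  moreover have "1/2 * outflow q xs0 \<le> (1 - t) * outflow q xs0"
    by (rule mult_right_mono) (use t out0 in auto)
  moreover have "outflow q xs0 + t * outflow h xs0 = (1 - t) * outflow q xs0 + t * outflow Q xs0"
    by (simp add: h_def flow_linear algebra_simps)
  ultimately have "outflow q xs0 / 2 \<le> outflow q xs0 + t * outflow h xs0" by linarith
  then have "ln (outflow q xs0 / 2) \<le> ln (outflow q xs0 + t * outflow h xs0)"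
    using out0 by simp
  with q0 t a_pos show ?thesis
    by (simp add: h_def a_def ln_mult algebra_simps)
qed

text \<open>
  Moving towards a positive circulation Q, the slope blows up as t tends to 0 from the right:
  the edge (xs0, y0) carries no mass although its source does.
\<close>

lemma free_energy_slope_lower_bound:
  assumes q: "q \<in> circulations d r" and Q: "Q \<in> circulations d r"
    and Q_pos: "\<And>xs y. xs \<in> tuples d \<Longrightarrow> Q (xs, y) > 0"
    and xs0: "xs0 \<in> tuples d" and q0: "q (xs0, y0) = 0" and out0: "outflow q xs0 > 0"
  shows "\<exists>S. \<forall>t. 0 < t \<longrightarrow> t \<le> 1/2 \<longrightarrow>
           S - Q (xs0, y0) * ln t \<le> free_energy_slope d H q (\<lambda>e. Q e - q e) t"
proof -
  define h where "h = (\<lambda>e. Q e - q e)"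
  define a where "a = Q (xs0, y0)"
  define b where "b e = (if e = (xs0, y0) then a * (ln (outflow q xs0 / 2) - ln a)
                         else min 0 (h e * ln (2 / q e)))" for e
  define S where "S = (\<Sum>xs\<in>tuples d. \<Sum>y\<in>UNIV. h (xs, y) * H (xs @ [y]) + b (xs, y))"
  have "S - a * ln t \<le> free_energy_slope d H q h t" if t: "0 < t" "t \<le> 1/2" for t
  proof -
    have "(\<Sum>y\<in>UNIV. if (xs, y) = (xs0, y0) then a * ln t else 0) = (if xs = xs0 then a * ln t else 0)"
      for xs by (cases "xs = xs0") simp_all
    then have "S - a * ln t = (\<Sum>xs\<in>tuples d. \<Sum>y\<in>UNIV. h (xs, y) * H (xs @ [y]) + b (xs, y)
                 - (if (xs, y) = (xs0, y0) then a * ln t else 0))"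
      using xs0 by (simp add: S_def sum_subtractf)
    also have "\<dots> \<le> free_energy_slope d H q h t"
      unfolding free_energy_slope_def
    proof (intro sum_mono)
      fix xs :: "'a list" and y :: 'a assume "xs \<in> tuples d"
      then show "h (xs, y) * H (xs @ [y]) + b (xs, y) - (if (xs, y) = (xs0, y0) then a * ln t else 0)
          \<le> h (xs, y) * (H (xs @ [y]) - ln (q (xs, y) + t * h (xs, y)) + ln (outflow q xs + t * outflow h xs))"
        using segment_log_ratio_lower_bound[OF q Q Q_pos _ t, of xs y]
          segment_log_ratio_at_vanishing_edge[OF Q Q_pos[OF xs0] q0 out0 t]
        by (cases "(xs, y) = (xs0, y0)") (auto simp: b_def h_def a_def algebra_simps)
    qed
    finally show ?thesis .
  qed
  then show ?thesis unfolding a_def h_def by blast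
qed

lemma free_energy_slope_pos_near_0:
  assumes q: "q \<in> circulations d r" and Q: "Q \<in> circulations d r"
    and Q_pos: "\<And>xs y. xs \<in> tuples d \<Longrightarrow> Q (xs, y) > 0"
    and xs0: "xs0 \<in> tuples d" and q0: "q (xs0, y0) = 0" and out0: "outflow q xs0 > 0"
  obtains t1 where "0 < t1" "t1 \<le> 1/2"
    "\<And>t. 0 < t \<Longrightarrow> t < t1 \<Longrightarrow> 0 < free_energy_slope d H q (\<lambda>e. Q e - q e) t"
proof -
  define a where "a = Q (xs0, y0)"
  have a_pos: "0 < a" using Q_pos[OF xs0] by (simp add: a_def)
  obtain S where S: "\<And>t. 0 < t \<Longrightarrow> t \<le> 1/2 \<Longrightarrow>
      S - a * ln t \<le> free_energy_slope d H q (\<lambda>e. Q e - q e) t"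
    using free_energy_slope_lower_bound[OF q Q Q_pos xs0 q0 out0] unfolding a_def by blast
  define t1 where "t1 = min (1/2) (exp (S / a) / 2)"
  have "exp (S / a) / 2 < exp (S / a)" by simp
  then have t1: "0 < t1" "t1 \<le> 1/2" "t1 < exp (S / a)" by (auto simp: t1_def min_less_iff_disj)
  have "0 < free_energy_slope d H q (\<lambda>e. Q e - q e) t" if t: "0 < t" "t < t1" for t
  proof -
    have "ln t < ln (exp (S / a))" using t t1 by (subst ln_less_cancel_iff) auto
    then have "a * ln t < S" using a_pos by (simp add: pos_less_divide_eq mult.commute)
    then show ?thesis using S[of t] t t1 by linarith
  qed
  with t1 show ?thesis by (intro that) auto
qed

lemma maximizer_edge_pos:
  assumes q: "q \<in> circulations d r"
    and max: "\<forall>q'\<in>circulations d r. free_energy d H q' \<le> free_energy d H q"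
    and xs0: "xs0 \<in> tuples d" and out0: "outflow q xs0 > 0"
  shows "q (xs0, y0) > 0"
proof (rule ccontr)
  assume "\<not> q (xs0, y0) > 0"
  with circulations_nonneg[OF q] have q0: "q (xs0, y0) = 0" by (meson order.antisym not_less)
  define Q where "Q = product_flow d r"
  have Q: "Q \<in> circulations d r" and Q_pos: "\<And>xs y. xs \<in> tuples d \<Longrightarrow> Q (xs, y) > 0"
    by (simp_all add: Q_def product_flow_in_circulations product_flow_pos)
  obtain t1 where t1: "0 < t1" "t1 \<le> 1/2"
    and slope_pos: "\<And>t. 0 < t \<Longrightarrow> t < t1 \<Longrightarrow> 0 < free_energy_slope d H q (\<lambda>e. Q e - q e) t"
    using free_energy_slope_pos_near_0[OF q Q Q_pos xs0 q0 out0] by blast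
  define \<phi> where "\<phi> t = free_energy d H (\<lambda>e. q e + t * (Q e - q e))" for t
  have "\<phi> 0 < \<phi> t1"
  proof (rule DERIV_pos_imp_increasing_open[OF t1(1)])
    fix t assume t: "0 < t" "t < t1"
    have "(\<phi> has_real_derivative free_energy_slope d H q (\<lambda>e. Q e - q e) t) (at t)"
      unfolding \<phi>_def using t t1 Q_pos circulations_nonneg[OF q]
      by (intro has_real_derivative_free_energy add_scaled_diff_pos) auto
    with slope_pos[OF t] show "\<exists>D. (\<phi> has_real_derivative D) (at t) \<and> 0 < D" by blast
  next
    have "continuous_on {0..t1} (\<lambda>t e. q e + t * (Q e - q e))"
      by (intro continuous_on_coordinatewise_then_product continuous_intros)
    moreover have "(\<lambda>t e. q e + t * (Q e - q e)) ` {0..t1} \<subseteq> {q. \<forall>e. 0 \<le> q e}"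
      using circulations_nonneg[OF segment_in_circulations[OF q Q]] t1 by auto
    ultimately show "continuous_on {0..t1} \<phi>"
      unfolding \<phi>_def by (rule continuous_on_compose2[OF continuous_on_free_energy])
  qed
  moreover have "\<phi> t1 \<le> \<phi> 0"
    using max segment_in_circulations[OF q Q] t1 by (simp add: \<phi>_def)
  ultimately show False by simp
qed

lemma outflow_shift_pos:
  assumes q: "q \<in> circulations d r" and xs: "xs \<in> tuples d" and pos: "q (xs, y) > 0"
  shows "outflow q (tl xs @ [y]) > 0"
proof -
  have ne: "xs \<noteq> []" using xs order_pos by auto
  have "q (hd xs # tl xs, y) \<le> (\<Sum>x\<in>UNIV. q (x # tl xs, y))"
    by (rule member_le_sum) (simp_all add: circulations_nonneg[OF q])
  then have "q (xs, y) \<le> inflow q (tl xs @ [y])"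
    using ne by (simp add: inflow_def)
  also have "\<dots> = outflow q (tl xs @ [y])"
    using xs ne by (intro circulations_outflow_eq_inflow[OF q, symmetric]) auto
  finally show ?thesis using pos by simp
qed

lemma outflow_pos_everywhere:
  assumes q: "q \<in> circulations d r"
    and edge_pos: "\<And>xs y. xs \<in> tuples d \<Longrightarrow> outflow q xs > 0 \<Longrightarrow> q (xs, y) > 0"
    and xs: "xs \<in> tuples d"
  shows "outflow q xs > 0"
proof -
  have "\<exists>xs0\<in>tuples d. outflow q xs0 > 0"
  proof (rule ccontr)
    assume "\<not> ?thesis"
    then have "(\<Sum>xs\<in>tuples d. outflow q xs) \<le> 0" by (intro sum_nonpos) (auto simp: not_less)
    with sum_outflow_circulation[OF q] show False by simp
  qed
  then obtain xs0 where xs0: "xs0 \<in> tuples d" "outflow q xs0 > 0" by blast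
  have "outflow q (drop k xs0 @ vs) > 0" if "k \<le> d" "length vs = k" for k vs
    using that
  proof (induction k arbitrary: vs)
    case 0
    then show ?case using xs0 by simp
  next
    case (Suc k)
    then obtain us v where vs: "vs = us @ [v]" and us: "length us = k"
      by (cases vs rule: rev_cases) auto
    have mem: "drop k xs0 @ us \<in> tuples d" using xs0 us Suc.prems by simp
    have "outflow q (drop k xs0 @ us) > 0" using Suc us by simp
    then have "outflow q (tl (drop k xs0 @ us) @ [v]) > 0"
      using edge_pos[OF mem] by (intro outflow_shift_pos[OF q mem]) auto
    moreover have "drop k xs0 \<noteq> []" using xs0 Suc.prems by simp
    ultimately show ?case by (simp add: vs drop_Suc tl_drop)
  qed
  from this[of d xs] xs xs0(1) show ?thesis by simp
qed

lemma maximizer_pos: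
  assumes q: "q \<in> circulations d r"
    and max: "\<forall>q'\<in>circulations d r. free_energy d H q' \<le> free_energy d H q"
    and xs: "xs \<in> tuples d"
  shows "q (xs, y) > 0"
  using maximizer_edge_pos[OF q max] outflow_pos_everywhere[OF q] xs by blast

end

section \<open>Potentials from the first variation\<close>

text \<open>
  The edge (xs, y) closed into cycles through the root replicate d a by three shift paths of
  length d; the loop at the root, counted d times, restores a vanishing head marginal.
\<close>

definition closing_flow :: "nat \<Rightarrow> 'a \<Rightarrow> 'a list \<Rightarrow> 'a \<Rightarrow> 'a list \<times> 'a \<Rightarrow> real" where
  "closing_flow d a xs y = (\<lambda>e. indicator {(xs, y)} e - indicator {(replicate d a, y)} e
     + real d * indicator {(replicate d a, a)} e + path_flow d a (tl xs @ [y]) e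
     - path_flow d a xs e - path_flow d a (replicate (d - 1) a @ [y]) e)"

lemma count_list_replicate: "count_list (replicate n a) x = (if a = x then n else 0)"
  by (induction n) auto

context first_marginal_constraint
begin

lemma tangent_direction_closing_flow:
  assumes xs: "xs \<in> tuples d"
  shows "tangent_direction d (closing_flow d a xs y)"
proof -
  have xs_eq: "xs = hd xs # tl xs" using xs order_pos by (cases xs) auto
  have loop: "tl (replicate d a) @ [a] = replicate d a"
    using order_pos by (cases d) (simp_all add: replicate_append_same)
  have "closing_flow d a xs y (zs, z) = 0" if "zs \<notin> tuples d" for zs z
    using that xs order_pos
    by (auto simp: closing_flow_def indicator_def path_flow_outside)
  moreover have "outflow (closing_flow d a xs y) v = inflow (closing_flow d a xs y) v"
    if v: "v \<in> tuples d" for v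
  proof -
    have "v \<noteq> []" using v order_pos by auto
    have path: "outflow (path_flow d a us) v =
        inflow (path_flow d a us) v + of_bool (us = v) - of_bool (replicate d a = v)"
      if "length us = d" for us
    proof -
      have "us \<noteq> []" using that order_pos by auto
      with outflow_path_flow[of d us v a] \<open>v \<noteq> []\<close> that show ?thesis by simp
    qed
    have edge: "inflow (indicator {(es, s)}) v = of_bool (tl es @ [s] = v)"
      if "length es = d" for es s
    proof -
      have "es \<noteq> []" using that order_pos by auto
      with inflow_indicator[of es v s] \<open>v \<noteq> []\<close> show ?thesis by simp
    qed
    show ?thesis
      using xs loop order_pos
      by (simp add: closing_flow_def flow_linear outflow_indicator edge path tl_replicate)
  qed
  moreover have "head_marginal d (closing_flow d a xs y) x = 0" for x
  proof -
    have "count_list xs x = count_list (tl xs) x + of_bool (hd xs = x)"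
      by (subst xs_eq) simp
    then show ?thesis
      using xs order_pos
      by (simp add: closing_flow_def flow_linear head_marginal_indicator head_marginal_path_flow
          count_list_replicate of_nat_diff algebra_simps)
  qed
  ultimately show ?thesis unfolding tangent_direction_def by blast
qed

lemma flow_pairing_closing_flow:
  assumes xs: "xs \<in> tuples d"
  shows "flow_pairing d (closing_flow d a xs y) g =
    g (xs, y) - g (replicate d a, y) + real d * g (replicate d a, a)
    + path_sum d a g (tl xs @ [y]) - path_sum d a g xs - path_sum d a g (replicate (d - 1) a @ [y])"
  using xs order_pos
  by (simp add: closing_flow_def flow_pairing_add flow_pairing_diff flow_pairing_scale
      flow_pairing_indicator flow_pairing_path_flow)

lemma maximizer_log_ratio_potential:
  assumes q: "q \<in> circulations d r"
    and max: "\<forall>q'\<in>circulations d r. free_energy d H q' \<le> free_energy d H q"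
  obtains \<kappa> \<delta> where "\<And>xs y. xs \<in> tuples d \<Longrightarrow>
      ln (q (xs, y)) - ln (outflow q xs) = H (xs @ [y]) + \<kappa> (tl xs @ [y]) - \<kappa> xs - \<delta> y"
proof -
  define g where "g = (\<lambda>e. H (fst e @ [snd e]) - ln (q e) + ln (outflow q (fst e)))"
  define a :: 'a where "a = undefined" \<comment> \<open>any letter serves as the root\<close>
  define \<kappa> where "\<kappa> = path_sum d a g"
  define \<delta> where "\<delta> y = g (replicate d a, y) - real d * g (replicate d a, a)
                        + \<kappa> (replicate (d - 1) a @ [y])" for y
  have "ln (q (xs, y)) - ln (outflow q xs) = H (xs @ [y]) + \<kappa> (tl xs @ [y]) - \<kappa> xs - \<delta> y"
    if xs: "xs \<in> tuples d" for xs y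
  proof -
    have "0 = free_energy_slope d H q (closing_flow d a xs y) 0"
      using free_energy_slope_zero_at_maximizer[OF q max maximizer_pos[OF q max]
          tangent_direction_closing_flow[OF xs]] by simp
    also have "\<dots> = g (xs, y) - g (replicate d a, y) + real d * g (replicate d a, a)
        + \<kappa> (tl xs @ [y]) - \<kappa> xs - \<kappa> (replicate (d - 1) a @ [y])"
      unfolding free_energy_slope_0 g_def[symmetric] \<kappa>_def by (rule flow_pairing_closing_flow[OF xs])
    finally show ?thesis by (simp add: \<delta>_def g_def)
  qed
  then show ?thesis by (rule that)
qed

end

section \<open>Stationary distributions of positive kernels\<close>

lemma conditional_kernel_in_W:
  fixes q :: "'a::finite list \<times> 'a \<Rightarrow> real"
  assumes q_pos: "\<And>xs y. xs \<in> tuples d \<Longrightarrow> q (xs, y) > 0"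
    and w: "\<And>xs y. xs \<in> tuples d \<Longrightarrow> w y xs = q (xs, y) / outflow q xs"
  shows "in_W d w"
proof -
  have out_pos: "outflow q xs > 0" if "xs \<in> tuples d" for xs
    using q_pos[OF that] by (rule outflow_pos)
  show ?thesis
    unfolding in_W_def
  proof (intro conjI ballI allI)
    fix xs :: "'a list" and y assume "xs \<in> tuples d"
    then show "w y xs > 0" using q_pos out_pos by (simp add: w)
  next
    fix xs :: "'a list" assume xs: "xs \<in> tuples d"
    have "(\<Sum>y\<in>UNIV. w y xs) = outflow q xs / outflow q xs"
      unfolding w[OF xs] sum_divide_distrib[symmetric] outflow_def ..
    then show "(\<Sum>y\<in>UNIV. w y xs) = 1" using out_pos[OF xs] by simp
  qed
qed

context first_marginal_constraint
begin

lemma stationary_conditional_kernel: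
  assumes q: "q \<in> circulations d r"
    and q_pos: "\<And>xs y. xs \<in> tuples d \<Longrightarrow> q (xs, y) > 0"
    and w: "\<And>xs y. xs \<in> tuples d \<Longrightarrow> w y xs = q (xs, y) / outflow q xs"
  shows "stationary d w (outflow q)"
  unfolding stationary_def
proof (intro conjI ballI)
  show "0 \<le> outflow q xs" for xs
    using circulations_nonneg[OF q] by (rule outflow_nonneg)
  show "(\<Sum>xs\<in>tuples d. outflow q xs) = 1"
    by (rule sum_outflow_circulation[OF q])
next
  fix ys :: "'a list" assume ys: "ys \<in> tuples d"
  have "outflow q (x # butlast ys) * w (last ys) (x # butlast ys) = q (x # butlast ys, last ys)" for x
    using tuples_Cons_butlast[OF ys] q_pos outflow_pos[of q "x # butlast ys"] by (simp add: w)
  then have "(\<Sum>x\<in>UNIV. outflow q (x # butlast ys) * w (last ys) (x # butlast ys)) = inflow q ys"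
    by (simp add: inflow_def)
  also have "\<dots> = outflow q ys"
    using circulations_outflow_eq_inflow[OF q ys] by simp
  finally show "(\<Sum>x\<in>UNIV. outflow q (x # butlast ys) * w (last ys) (x # butlast ys)) = outflow q ys" .
qed

end

lemma stationary_max_ratio_shift:
  assumes d: "1 \<le> d" and w_pos: "\<And>xs y. xs \<in> tuples d \<Longrightarrow> w y xs > 0"
    and p: "stationary d w p" and p': "stationary d w p'"
    and le_M: "\<And>xs. xs \<in> tuples d \<Longrightarrow> p' xs \<le> M * p xs"
    and ys: "ys \<in> tuples d" and eq_M: "p' ys = M * p ys"
  shows "p' (x # butlast ys) = M * p (x # butlast ys)"
proof -
  define a where "a z = p (z # butlast ys) * w (last ys) (z # butlast ys)" for z
  define a' where "a' z = p' (z # butlast ys) * w (last ys) (z # butlast ys)" for z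
  have mem: "z # butlast ys \<in> tuples d" for z using ys d by simp
  have "(\<Sum>z\<in>UNIV. a z) = p ys" "(\<Sum>z\<in>UNIV. a' z) = p' ys"
    using p p' ys unfolding stationary_def a_def a'_def by blast+
  then have "(\<Sum>z\<in>UNIV. M * a z - a' z) = M * p ys - p' ys"
    by (simp add: sum_subtractf sum_distrib_left[symmetric])
  also have "\<dots> = 0" using eq_M by simp
  finally have "M * a x - a' x = 0"
    using le_M[OF mem] w_pos[OF mem]
    by (subst (asm) sum_nonneg_eq_0_iff) (auto simp: a_def a'_def mult_right_mono)
  with w_pos[OF mem[of x], of "last ys"] show ?thesis
    by (simp add: a_def a'_def)
qed

lemma stationary_unique:
  assumes d: "1 \<le> d" and w_pos: "\<And>xs y. xs \<in> tuples d \<Longrightarrow> w y xs > 0"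
    and p: "stationary d w p" and p_pos: "\<And>xs. xs \<in> tuples d \<Longrightarrow> p xs > 0"
    and p': "stationary d w p'"
    and xs: "xs \<in> tuples d"
  shows "p' xs = p xs"
proof -
  define M where "M = Max ((\<lambda>xs. p' xs / p xs) ` tuples d)"
  have le_M: "p' xs \<le> M * p xs" if "xs \<in> tuples d" for xs
  proof -
    have "p' xs / p xs \<le> M" unfolding M_def using that by (intro Max_ge) auto
    then show ?thesis using p_pos[OF that] by (simp add: pos_divide_le_eq mult.commute)
  qed
  have "replicate d undefined \<in> tuples d" by simp
  then have "tuples d \<noteq> {}" by blast
  then obtain ys0 where ys0: "ys0 \<in> tuples d" "M = p' ys0 / p ys0"
    unfolding M_def by (rule obtains_MAX[OF finite_tuples])
  have prefix: "p' (us @ take (d - length us) ys0) = M * p (us @ take (d - length us) ys0)"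
    if "length us \<le> d" for us
    using that
  proof (induction us)
    case Nil
    then show ?case using ys0 p_pos[OF ys0(1)] by simp
  next
    case (Cons x us)
    let ?ys = "us @ take (d - length us) ys0"
    have "?ys \<in> tuples d" using Cons.prems ys0(1) by simp
    moreover have "butlast ?ys = us @ take (d - length (x # us)) ys0"
      using Cons.prems ys0(1) by (auto simp: butlast_append butlast_take)
    ultimately show ?case
      using stationary_max_ratio_shift[OF d w_pos p p' le_M, of ?ys x] Cons by simp
  qed
  have all: "p' xs = M * p xs" if "xs \<in> tuples d" for xs
    using prefix[of xs] that by simp
  have "1 = M * (\<Sum>xs\<in>tuples d. p xs)"
    using p' all by (simp add: stationary_def sum_distrib_left)
  with p have "M = 1" by (simp add: stationary_def)
  with all[OF xs] show ?thesis by simp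
qed

theorem theorem2:
  fixes H :: "'a::finite list \<Rightarrow> real" and r :: "'a \<Rightarrow> real" and d :: nat
  assumes "d \<ge> 1" and "pos_prob r"
  shows "\<exists>(\<kappa>::'a list \<Rightarrow> real) (\<delta>::'a \<Rightarrow> real).
           in_W d (exp_kernel H \<kappa> \<delta>) \<and>
           (\<exists>p. stationary d (exp_kernel H \<kappa> \<delta>) p) \<and>
           (\<forall>p. stationary d (exp_kernel H \<kappa> \<delta>) p \<longrightarrow>
                (\<forall>x1. first_marginal d p x1 = r x1))"
proof -
  interpret first_marginal_constraint d r using assms by unfold_locales
  obtain q where q: "q \<in> circulations d r"
    and max: "\<forall>q'\<in>circulations d r. free_energy d H q' \<le> free_energy d H q"
    using free_energy_maximizer_exists by blast
  have q_pos: "\<And>xs y. xs \<in> tuples d \<Longrightarrow> q (xs, y) > 0" by (rule maximizer_pos[OF q max])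
  obtain \<kappa> \<delta> where potential: "\<And>xs y. xs \<in> tuples d \<Longrightarrow>
      ln (q (xs, y)) - ln (outflow q xs) = H (xs @ [y]) + \<kappa> (tl xs @ [y]) - \<kappa> xs - \<delta> y"
    using maximizer_log_ratio_potential[OF q max] by blast
  define w where "w = exp_kernel H \<kappa> \<delta>"
  have w: "w y xs = q (xs, y) / outflow q xs" if "xs \<in> tuples d" for xs y
    using potential[OF that, symmetric] q_pos[OF that] outflow_pos[of q xs, OF q_pos[OF that]]
    by (simp add: w_def exp_kernel_def exp_diff)
  have W: "in_W d w" by (rule conditional_kernel_in_W[OF q_pos w])
  have stat: "stationary d w (outflow q)"
    by (rule stationary_conditional_kernel[OF q q_pos w])
  have "first_marginal d p x = r x" if p: "stationary d w p" for p x
  proof -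
    have "p xs = outflow q xs" if "xs \<in> tuples d" for xs
      using W p q_pos that unfolding in_W_def
      by (intro stationary_unique[OF order_pos _ stat _ p] outflow_pos) auto
    then have "first_marginal d p x = head_marginal d q x"
      unfolding first_marginal_def head_marginal_def using order_pos by (intro sum.cong) auto
    then show ?thesis by (simp add: circulations_head_marginal[OF q])
  qed
  then show ?thesis
    using W stat unfolding w_def by blast
qed

end
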